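(* For any $\ell\ge1$ and $a_1,\dots,a_\ell\in\{1,\dots,n\}$, the following equality holds in the reduction algebra $N/I$: $$P(x^{a_1}+I)\,P(x^{a_2}+I)\cdots P(x^{a_\ell}+I)=P(x^{a_1}x^{a_2}\cdots x^{a_\ell}+I).$$
   Context: $W_\eta(2n)$ is the unital associative $\mathbb{C}$-algebra generated by $x^a,\partial_a$ ($a=1,\dots,n$) and central elements $\eta_{ab},\eta^{ab}$ subject to $x^ax^b=x^bx^a$, $\partial_a\partial_b=\partial_b\partial_a$, $\partial_ax^b-x^b\partial_a=\delta_a^b$, $\eta_{ab}=\eta_{ba}$, $\sum_b\eta_{ab}\eta^{bc}=\delta_a^c$. Repeated upper/lower indices are summed; $x_a=\eta_{ab}x^b$, $\partial^a=\eta^{ab}\partial_b$; $E=\frac i2\partial_a\partial^a$, $F=\frac i2x_ax^a$, $H=-\frac12(x^a\partial_a+\partial_ax^a)$. $A$ is the localization of $W_\eta(2n)$ at the nonzero polynomials in $H$, $I=AE$ is the left ideal generated by $E$, $N=\{m\in A: Im\subset I\}$ its normalizer, and $N/I$ is the reduction algebra with product $(m+I)(m'+I)=mm'+I$. The extremal projector acts on $A/I$ by $P(w+I)=\sum_{k\ge0}\frac{(-1)^k}{k!}f_k(H)F^k(\operatorname{ad}E)^k(w)+I$, where $(\operatorname{ad}E)(y)=Ey-yE$, $f_0=1$ and $f_k(H)=\big((H+2)(H+3)\cdots(H+k+1)\big)^{-1}$; it is known that $P(w+I)\in N/I$ for all $w\in A$, that $P$ is the identity on $N/I$, and that $P(Fy+I)=0$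 for all $y\in A$. *)

theory Defs
  imports Complex_Main "HOL-Computational_Algebra.Polynomial"
begin

text \<open>Generators of the localized algebra A: x^a, d_a, eta_ab, eta^ab (indices in 1..n),
  and a formal inverse Inv p of p(H) for every polynomial p (Inv 0 is killed).\<close>
datatype gen = X nat | D nat | Eta nat nat | EtaU nat nat | Inv "complex poly"

datatype expr = Gen gen | Scal complex | Add expr expr | Mul expr expr

fun esum :: "(nat \<Rightarrow> expr) \<Rightarrow> nat list \<Rightarrow> expr" where
  "esum f [] = Scal 0"
| "esum f (a # as) = Add (f a) (esum f as)"

fun eprod :: "expr list \<Rightarrow> expr" where
  "eprod [] = Scal 1"
| "eprod (e # es) = Mul e (eprod es)"

fun epow :: "expr \<Rightarrow> nat \<Rightarrow> expr" where
  "epow e 0 = Scal 1"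
| "epow e (Suc k) = Mul e (epow e k)"

definition idx :: "nat \<Rightarrow> nat list" where
  "idx n = [1..<Suc n]"

definition esub :: "expr \<Rightarrow> expr \<Rightarrow> expr" where
  "esub a b = Add a (Mul (Scal (-1)) b)"

definition Eexpr :: "nat \<Rightarrow> expr" where
  "Eexpr n = Mul (Scal (\<i>/2)) (esum (\<lambda>a. esum (\<lambda>b.
      Mul (Gen (D a)) (Mul (Gen (EtaU a b)) (Gen (D b)))) (idx n)) (idx n))"

definition Fexpr :: "nat \<Rightarrow> expr" where
  "Fexpr n = Mul (Scal (\<i>/2)) (esum (\<lambda>a. esum (\<lambda>b.
      Mul (Mul (Gen (Eta a b)) (Gen (X b))) (Gen (X a))) (idx n)) (idx n))"

definition Hexpr :: "nat \<Rightarrow> expr" where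
  "Hexpr n = Mul (Scal (-1/2)) (esum (\<lambda>a.
      Add (Mul (Gen (X a)) (Gen (D a))) (Mul (Gen (D a)) (Gen (X a)))) (idx n))"

definition evalH :: "nat \<Rightarrow> complex poly \<Rightarrow> expr" where
  "evalH n p = esum (\<lambda>i. Mul (Scal (coeff p i)) (epow (Hexpr n) i)) [0..<Suc (degree p)]"

fun valid_gen :: "nat \<Rightarrow> gen \<Rightarrow> bool" where
  "valid_gen n (X a) = (a \<in> {1..n})"
| "valid_gen n (D a) = (a \<in> {1..n})"
| "valid_gen n (Eta a b) = (a \<in> {1..n} \<and> b \<in> {1..n})"
| "valid_gen n (EtaU a b) = (a \<in> {1..n} \<and> b \<in> {1..n})"
| "valid_gen n (Inv p) = (p \<noteq> 0)"

fun is_wgen :: "gen \<Rightarrow> bool" where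
  "is_wgen (Inv p) = False"
| "is_wgen _ = True"

text \<open>The congruence presenting A = W_eta(2n) localized at nonzero polynomials in H,
  as the unital associative C-algebra freely generated by the generators modulo the
  defining relations of W_eta(2n) and the relations p(H) (p(H))^{-1} = (p(H))^{-1} p(H) = 1.\<close>
inductive weq :: "nat \<Rightarrow> expr \<Rightarrow> expr \<Rightarrow> bool" for n where
  refl: "weq n e e"
| sym: "weq n e f \<Longrightarrow> weq n f e"
| trans: "weq n e f \<Longrightarrow> weq n f g \<Longrightarrow> weq n e g"
| add_cong: "weq n a a' \<Longrightarrow> weq n b b' \<Longrightarrow> weq n (Add a b) (Add a' b')"
| mul_cong: "weq n a a' \<Longrightarrow> weq n b b' \<Longrightarrow> weq n (Mul a b) (Mul a' b')"
| add_assoc: "weq n (Add (Add a b) c) (Add a (Add b c))"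
| add_comm: "weq n (Add a b) (Add b a)"
| add_zero: "weq n (Add a (Scal 0)) a"
| mul_assoc: "weq n (Mul (Mul a b) c) (Mul a (Mul b c))"
| mul_one_l: "weq n (Mul (Scal 1) a) a"
| mul_one_r: "weq n (Mul a (Scal 1)) a"
| mul_zero_l: "weq n (Mul (Scal 0) a) (Scal 0)"
| distl: "weq n (Mul a (Add b c)) (Add (Mul a b) (Mul a c))"
| distr: "weq n (Mul (Add a b) c) (Add (Mul a c) (Mul b c))"
| scal_add: "weq n (Add (Scal c) (Scal d)) (Scal (c + d))"
| scal_mul: "weq n (Mul (Scal c) (Scal d)) (Scal (c * d))"
| scal_comm: "weq n (Mul (Scal c) a) (Mul a (Scal c))"
| kill: "\<not> valid_gen n g \<Longrightarrow> weq n (Gen g) (Scal 0)"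
| xx: "weq n (Mul (Gen (X a)) (Gen (X b))) (Mul (Gen (X b)) (Gen (X a)))"
| dd: "weq n (Mul (Gen (D a)) (Gen (D b))) (Mul (Gen (D b)) (Gen (D a)))"
| dx: "a \<in> {1..n} \<Longrightarrow> b \<in> {1..n} \<Longrightarrow>
       weq n (esub (Mul (Gen (D a)) (Gen (X b))) (Mul (Gen (X b)) (Gen (D a))))
             (Scal (if a = b then 1 else 0))"
| eta_central: "is_wgen g \<Longrightarrow> weq n (Mul (Gen (Eta a b)) (Gen g)) (Mul (Gen g) (Gen (Eta a b)))"
| etaU_central: "is_wgen g \<Longrightarrow> weq n (Mul (Gen (EtaU a b)) (Gen g)) (Mul (Gen g) (Gen (EtaU a b)))"
| eta_sym: "weq n (Gen (Eta a b)) (Gen (Eta b a))"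
| eta_inv: "a \<in> {1..n} \<Longrightarrow> c \<in> {1..n} \<Longrightarrow>
       weq n (esum (\<lambda>b. Mul (Gen (Eta a b)) (Gen (EtaU b c))) (idx n))
             (Scal (if a = c then 1 else 0))"
| inv_l: "p \<noteq> 0 \<Longrightarrow> weq n (Mul (evalH n p) (Gen (Inv p))) (Scal 1)"
| inv_r: "p \<noteq> 0 \<Longrightarrow> weq n (Mul (Gen (Inv p)) (evalH n p)) (Scal 1)"

definition inI :: "nat \<Rightarrow> expr \<Rightarrow> bool" where
  "inI n m \<longleftrightarrow> (\<exists>y. weq n m (Mul y (Eexpr n)))"

definition adE :: "nat \<Rightarrow> expr \<Rightarrow> expr" where
  "adE n y = esub (Mul (Eexpr n) y) (Mul y (Eexpr n))"

text \<open>(H+2)(H+3)...(H+k+1) as a polynomial in H; f_k(H) is its inverse.\<close>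
definition fpoly :: "nat \<Rightarrow> complex poly" where
  "fpoly k = (\<Prod>j\<in>{2..k+1}. [:of_nat j, 1:])"

definition Ptrunc :: "nat \<Rightarrow> nat \<Rightarrow> expr \<Rightarrow> expr" where
  "Ptrunc n K w = esum (\<lambda>k. Mul (Scal ((-1) ^ k / fact k))
       (Mul (Gen (Inv (fpoly k))) (Mul (epow (Fexpr n) k) ((adE n ^^ k) w)))) [0..<Suc K]"

text \<open>P(w+I) = c+I : the series defining P(w+I) converges in A/I to c+I,
  i.e. its partial sums are eventually congruent to c modulo I.\<close>
definition P_of :: "nat \<Rightarrow> expr \<Rightarrow> expr \<Rightarrow> bool" where
  "P_of n w c \<longleftrightarrow> (\<exists>K0. \<forall>K\<ge>K0. inI n (esub (Ptrunc n K w) c))"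

definition xmono :: "nat list \<Rightarrow> expr" where
  "xmono as = eprod (map (\<lambda>a. Gen (X a)) as)"

end

theory Submission
  imports Defs
begin

text \<open>
  Since \<open>ad E x\<^sup>a = i \<partial>\<^sup>a\<close> and \<open>ad E \<partial>\<^sup>a = 0\<close>, the power \<open>(ad E)\<^sup>k\<close> kills every
  monomial \<open>x\<^sup>a\<^sup>1 \<cdots> x\<^sup>a\<^sup>l\<close> with \<open>k > l\<close>; hence all projector series occurring here are
  finite sums and \<open>P(x\<^sup>a) = x\<^sup>a - i f\<^sub>1(H) F \<partial>\<^sup>a\<close>.
  Writing \<open>P\<^sub>l\<close> for the \<open>l\<close>-th partial sum, one shows \<open>P(x\<^sup>a) P\<^sub>l(z) = P\<^sub>l\<^sub>+\<^sub>1(x\<^sup>a z)\<close>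
  for every \<open>z\<close> killed by \<open>(ad E)\<^sup>l\<^sup>+\<^sup>1\<close>, comparing the two sides term by term.
  The ingredients are \<open>[\<partial>\<^sup>a, F\<^sup>k] = k i x\<^sup>a F\<^sup>k\<^sup>-\<^sup>1\<close>, the shift rules
  \<open>x\<^sup>a p(H) = p(H+1) x\<^sup>a\<close>, \<open>\<partial>\<^sup>a p(H) = p(H-1) \<partial>\<^sup>a\<close>, \<open>F p(H) = p(H+2) F\<close>, and the
  identity \<open>f\<^sub>k(H+1) + k f\<^sub>k\<^sub>+\<^sub>1(H) = f\<^sub>k(H)\<close>.
  Finally \<open>E P(x\<^sup>a) \<in> A E\<close>, so congruences modulo \<open>I\<close> may be multiplied by these factors.
\<close>

lemma if_zero_mult: "(if P then a else 0) * z = (if P then a * z else (0::'a::mult_zero))"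
  by simp

lemma mult_if_zero: "z * (if P then a else 0) = (if P then z * a else (0::'a::mult_zero))"
  by simp

lemma sum_if_const: "(\<Sum>y\<in>B. if P then f y else 0) = (if P then sum f B else (0::'a::comm_monoid_add))"
  by simp

lemma power_mult_left_commute: "(x::'a::monoid_mult) ^ k * (x * w) = x * (x ^ k * w)"
  by (simp add: mult.assoc[symmetric] power_commutes)

section \<open>The algebra as a ring\<close>

lemma weq_neg_add_self: "weq n (Add (Mul (Scal (-1)) a) a) (Scal 0)"
proof -
  have "weq n (Add (Mul (Scal (-1)) a) a) (Add (Mul (Scal (-1)) a) (Mul (Scal 1) a))"
    by (intro weq.add_cong weq.refl weq.sym[OF weq.mul_one_l])
  moreover have "weq n (Add (Mul (Scal (-1)) a) (Mul (Scal 1) a)) (Mul (Add (Scal (-1)) (Scal 1)) a)"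
    by (rule weq.sym[OF weq.distr])
  moreover have "weq n (Mul (Add (Scal (-1)) (Scal 1)) a) (Mul (Scal 0) a)"
    using weq.mul_cong[OF weq.scal_add[of n "-1" 1] weq.refl[of n a]] by simp
  ultimately show ?thesis by (meson weq.trans weq.mul_zero_l)
qed

text \<open>
  The congruence \<open>weq n\<close> depends on \<open>n\<close>, so instead of one quotient type per \<open>n\<close> we
  form the product of the algebras \<open>A\<^sub>m\<close> over all \<open>m\<close>: families of expressions modulo
  \<open>weq m\<close> in every component \<open>m\<close>.  The algebra \<open>A = A\<^sub>n\<close> is recovered as the corner
  cut out by the central idempotent \<open>wone n\<close>.
\<close>

definition weq_pointwise :: "(nat \<Rightarrow> expr) \<Rightarrow> (nat \<Rightarrow> expr) \<Rightarrow> bool" where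
  "weq_pointwise f g \<longleftrightarrow> (\<forall>m. weq m (f m) (g m))"

lemma equivp_weq_pointwise: "equivp weq_pointwise"
  unfolding weq_pointwise_def
  by (intro equivpI reflpI sympI transpI) (auto intro: weq.refl weq.sym weq.trans)

quotient_type wfam = "nat \<Rightarrow> expr" / weq_pointwise by (rule equivp_weq_pointwise)

instantiation wfam :: "{ring, monoid_mult}"
begin
lift_definition zero_wfam :: wfam is "\<lambda>m. Scal 0" .
lift_definition one_wfam :: wfam is "\<lambda>m. Scal 1" .
lift_definition plus_wfam :: "wfam \<Rightarrow> wfam \<Rightarrow> wfam" is "\<lambda>f g m. Add (f m) (g m)"
  by (auto simp: weq_pointwise_def intro: weq.add_cong)
lift_definition times_wfam :: "wfam \<Rightarrow> wfam \<Rightarrow> wfam" is "\<lambda>f g m. Mul (f m) (g m)"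
  by (auto simp: weq_pointwise_def intro: weq.mul_cong)
lift_definition uminus_wfam :: "wfam \<Rightarrow> wfam" is "\<lambda>f m. Mul (Scal (-1)) (f m)"
  by (auto simp: weq_pointwise_def intro: weq.mul_cong weq.refl)
lift_definition minus_wfam :: "wfam \<Rightarrow> wfam \<Rightarrow> wfam" is "\<lambda>f g m. esub (f m) (g m)"
  by (auto simp: weq_pointwise_def esub_def intro!: weq.mul_cong weq.add_cong weq.refl)
instance
proof
  fix a b c :: wfam
  show "a + b + c = a + (b + c)" by transfer (auto simp: weq_pointwise_def intro: weq.add_assoc)
  show "a + b = b + a" by transfer (auto simp: weq_pointwise_def intro: weq.add_comm)
  show "0 + a = a"
    by transfer (auto simp: weq_pointwise_def intro: weq.add_comm weq.add_zero weq.trans)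
  show "- a + a = 0" by transfer (auto simp: weq_pointwise_def intro: weq_neg_add_self)
  show "a - b = a + - b" by transfer (auto simp: weq_pointwise_def esub_def intro: weq.refl)
  show "a * b * c = a * (b * c)" by transfer (auto simp: weq_pointwise_def intro: weq.mul_assoc)
  show "(a + b) * c = a * c + b * c" by transfer (auto simp: weq_pointwise_def intro: weq.distr)
  show "a * (b + c) = a * b + a * c" by transfer (auto simp: weq_pointwise_def intro: weq.distl)
  show "1 * a = a" by transfer (auto simp: weq_pointwise_def intro: weq.mul_one_l)
  show "a * 1 = a" by transfer (auto simp: weq_pointwise_def intro: weq.mul_one_r)
qed
end

lift_definition wscalar :: "complex \<Rightarrow> wfam" is "\<lambda>c m. Scal c" .
lift_definition wcls :: "nat \<Rightarrow> expr \<Rightarrow> wfam" is "\<lambda>n e m. if m = n then e else Scal 0" .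

definition wone :: "nat \<Rightarrow> wfam" where
  "wone n = wcls n (Scal 1)"

lemma wcls_eq_iff: "wcls n a = wcls n b \<longleftrightarrow> weq n a b"
  by transfer (auto simp: weq_pointwise_def intro: weq.refl)

lemma wcls_Add: "wcls n (Add a b) = wcls n a + wcls n b"
  by transfer (auto simp: weq_pointwise_def intro: weq.refl weq.sym[OF weq.add_zero])

lemma wcls_Mul: "wcls n (Mul a b) = wcls n a * wcls n b"
  by transfer (auto simp: weq_pointwise_def intro: weq.refl weq.sym[OF weq.mul_zero_l])

lemma wcls_Scal: "wcls n (Scal c) = wscalar c * wone n"
proof -
  have "weq m (Scal 0) (Mul (Scal c) (Scal 0))" for m
    using weq.sym[OF weq.scal_mul[of m c 0]] by simp
  then show ?thesis
    unfolding wone_def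
    by transfer (auto simp: weq_pointwise_def intro: weq.refl weq.sym[OF weq.mul_one_r])
qed

lemma wscalar_commute: "wscalar c * z = z * wscalar c"
  by transfer (auto simp: weq_pointwise_def intro: weq.scal_comm)

lemma wscalar_add: "wscalar (c + d) = wscalar c + wscalar d"
  by transfer (auto simp: weq_pointwise_def intro: weq.sym[OF weq.scal_add])

lemma wscalar_mult: "wscalar (c * d) = wscalar c * wscalar d"
  by transfer (auto simp: weq_pointwise_def intro: weq.sym[OF weq.scal_mul])

lemma wscalar_0: "wscalar 0 = 0"
  by transfer (auto simp: weq_pointwise_def intro: weq.refl)

lemma wscalar_1: "wscalar 1 = 1"
  by transfer (auto simp: weq_pointwise_def intro: weq.refl)

lemma wscalar_minus_one_mult: "wscalar (-1) * z = - z"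
  by transfer (auto simp: weq_pointwise_def intro: weq.refl)

lemma wone_commute: "wone n * z = z * wone n"
  unfolding wone_def
  by transfer (auto simp: weq_pointwise_def intro: weq.refl weq.scal_comm)

lemma wone_mult_wcls: "wone n * wcls n e = wcls n e"
  unfolding wone_def
  by transfer (auto simp: weq_pointwise_def intro: weq.mul_one_l weq.mul_zero_l)

lemma wcls_mult_wone: "wcls n e * wone n = wcls n e"
  using wone_mult_wcls wone_commute by metis

lemma wone_mult_wcls_mult: "wone n * (wcls n e * w) = wcls n e * w"
  by (simp add: wone_mult_wcls flip: mult.assoc)

lemma wcls_mult_wone_mult: "wcls n e * (wone n * w) = wcls n e * w"
  by (simp add: wcls_mult_wone flip: mult.assoc)

lemma wone_idem: "wone n * wone n = wone n"
  unfolding wone_def by (rule wone_mult_wcls[unfolded wone_def])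

lemma mult_wone_eq_wcls: "\<exists>e. z * wone n = wcls n e"
proof -
  obtain f where z: "z = abs_wfam f" by (metis Quotient_wfam Quotient_abs_rep)
  have "z * wone n = wcls n (f n)"
    unfolding z wone_def
    apply transfer
    apply (auto simp: weq_pointwise_def intro: weq.mul_one_r)
    apply (meson weq.mul_zero_l weq.scal_comm weq.trans weq.sym)
    done
  then show ?thesis by blast
qed

lemma wcls_esub: "wcls n (esub a b) = wcls n a - wcls n b"
  unfolding esub_def wcls_Add wcls_Mul wcls_Scal
  by (simp add: mult.assoc wone_mult_wcls wscalar_minus_one_mult)

lemma wcls_esum: "wcls n (esum f l) = sum_list (map (\<lambda>a. wcls n (f a)) l)"
  by (induction l) (auto simp: wcls_Add wcls_Scal wscalar_0)

lemma wcls_eprod: "wcls n (eprod es) = foldr (*) (map (wcls n) es) (wone n)"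
  by (induction es) (auto simp: wcls_Mul wcls_Scal wscalar_1)

lemma wcls_epow: "wcls n (epow e k) = wone n * wcls n e ^ k"
  by (induction k) (auto simp: wcls_Mul wcls_Scal wscalar_1 wcls_mult_wone_mult wone_mult_wcls_mult)

lemma wcls_kill: "\<not> valid_gen n g \<Longrightarrow> wcls n (Gen g) = 0"
  using wcls_eq_iff[of n "Gen g" "Scal 0"] weq.kill[of n g] by (simp add: wcls_Scal wscalar_0)

definition wscale :: "complex \<Rightarrow> wfam \<Rightarrow> wfam" where
  "wscale c z = wscalar c * z"

lemma wscale_mult_left [simp]: "wscale c z * w = wscale c (z * w)"
  by (simp add: wscale_def mult.assoc)
lemma mult_wscale [simp]: "z * wscale c w = wscale c (z * w)"
  by (metis wscale_def mult.assoc wscalar_commute)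
lemma wscale_wscale [simp]: "wscale c (wscale d z) = wscale (c * d) z"
  by (simp add: wscale_def wscalar_mult mult.assoc)
lemma wscale_add [simp]: "wscale c (z + w) = wscale c z + wscale c w"
  by (simp add: wscale_def distrib_left)
lemma wscale_diff [simp]: "wscale c (z - w) = wscale c z - wscale c w"
  by (simp add: wscale_def right_diff_distrib)
lemma wscale_zero [simp]: "wscale c 0 = 0"
  by (simp add: wscale_def)
lemma wscale_0 [simp]: "wscale 0 z = 0"
  by (simp add: wscale_def wscalar_0)
lemma wscale_1 [simp]: "wscale 1 z = z"
  by (simp add: wscale_def wscalar_1)
lemma wscale_sum: "wscale c (sum f A) = (\<Sum>a\<in>A. wscale c (f a))"
  by (simp add: wscale_def sum_distrib_left)
lemma wscale_add_left: "wscale (c + d) z = wscale c z + wscale d z"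
  by (simp add: wscale_def wscalar_add distrib_right)
lemma wscale_minus_one: "wscale (-1) z = - z"
  by (simp add: wscale_def wscalar_minus_one_mult)
lemma wscale_uminus_left: "wscale (- c) z = - wscale c z"
  by (metis mult_minus1 wscale_minus_one wscale_wscale)
lemma add_self_eq_wscale_2: "z + z = wscale 2 z"
  by (metis one_add_one wscale_1 wscale_add_left)

lemma wcls_Mul_Scal: "wcls n (Mul (Scal c) e) = wscale c (wcls n e)"
  by (simp add: wcls_Mul wcls_Scal wscale_def mult.assoc wone_mult_wcls)

definition central :: "wfam \<Rightarrow> bool" where
  "central c \<longleftrightarrow> (\<forall>w. c * w = w * c)"

lemma central_commute: "central c \<Longrightarrow> w * c = c * w"
  by (simp add: central_def)
lemma central_left_commute: "central c \<Longrightarrow> w * (c * v) = c * (w * v)"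
  by (metis central_def mult.assoc)

lemma central_if_commutes_wcls:
  assumes "\<And>e. c * wcls n e = wcls n e * c" and "c * wone n = c"
  shows "central c"
  unfolding central_def
proof
  fix w
  obtain e where e: "w * wone n = wcls n e" using mult_wone_eq_wcls by blast
  have "c * w = c * (w * wone n)" using assms(2) by (metis mult.assoc wone_commute)
  also have "\<dots> = (w * wone n) * c" unfolding e by (rule assms(1))
  also have "\<dots> = w * c" using assms(2) wone_commute by (metis mult.assoc)
  finally show "c * w = w * c" .
qed

text \<open>
  Membership \<open>a \<in> {1..n}\<close> is hidden behind a constant so that the simplifier does not
  split it into two inequalities.
\<close>

definition indices :: "nat \<Rightarrow> nat set" where
  "indices n = {1..n}"

lemma finite_indices [simp]: "finite (indices n)"
  by (simp add: indices_def)

lemma wcls_esum_indices: "wcls n (esum f (idx n)) = (\<Sum>a\<in>indices n. wcls n (f a))"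
proof -
  have "set [1..<Suc n] = indices n" by (auto simp: indices_def)
  then show ?thesis
    unfolding wcls_esum idx_def by (metis sum_set_upt_conv_sum_list_nat)
qed

lemma fpoly_0: "fpoly 0 = 1"
  by (simp add: fpoly_def)

lemma fpoly_Suc: "fpoly (Suc k) = fpoly k * [:of_nat (k + 2), 1:]"
proof -
  have "{2..Suc k + 1} = insert (k + 2) {2..k + 1}" by auto
  then show ?thesis unfolding fpoly_def by (simp add: mult.commute)
qed

lemma fpoly_nonzero: "fpoly k \<noteq> 0"
  by (induction k) (simp_all add: fpoly_0 fpoly_Suc del: mult_pCons_left mult_pCons_right)

lemma fpoly_1: "fpoly 1 = [:2, 1:]"
  by (simp add: fpoly_Suc[of 0] fpoly_0 del: mult_pCons_left mult_pCons_right)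

lemma pcompose_linear: "pcompose [:a, 1:] [:c, 1:] = [:a + c, (1::complex):]"
  by (simp add: pcompose_pCons)

lemma pcompose_linear_nonzero: "p \<noteq> 0 \<Longrightarrow> pcompose p [:c, 1::complex:] \<noteq> 0"
  using pcompose_eq_0[of p "[:c,1:]"] by auto

lemma fpoly_Suc_pcompose: "fpoly (Suc k) = [:2, 1:] * pcompose (fpoly k) [:1, 1:]"
proof (induction k)
  case 0
  then show ?case
    by (simp add: fpoly_Suc fpoly_0 pcompose_1 del: mult_pCons_left mult_pCons_right)
next
  case (Suc k)
  have "fpoly (Suc (Suc k)) = [:2, 1:] * pcompose (fpoly k) [:1, 1:] * [:of_nat (Suc k + 2), 1:]"
    by (simp only: fpoly_Suc[of "Suc k"] Suc.IH)
  also have "[:of_nat (Suc k + 2), 1:] = pcompose [:of_nat (k + 2), 1:] [:1, 1::complex:]"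
    by (simp add: pcompose_linear)
  finally show ?case
    by (simp only: fpoly_Suc pcompose_mult mult.assoc)
qed

definition proj_coeff :: "nat \<Rightarrow> complex" where
  "proj_coeff k = (-1) ^ k / fact k"

lemma proj_coeff_Suc: "proj_coeff (Suc k) * (of_nat (Suc k) * \<i>) = - (proj_coeff k * \<i>)"
proof -
  have "proj_coeff (Suc k) * of_nat (Suc k) = - proj_coeff k"
    unfolding proj_coeff_def fact_Suc by (simp del: of_nat_Suc)
  then show ?thesis by (simp only: mult.assoc[symmetric]) simp
qed

context
  fixes n :: nat
begin

abbreviation xw :: "nat \<Rightarrow> wfam" where "xw a \<equiv> wcls n (Gen (X a))"
abbreviation dw :: "nat \<Rightarrow> wfam" where "dw a \<equiv> wcls n (Gen (D a))"
abbreviation etaw :: "nat \<Rightarrow> nat \<Rightarrow> wfam" where "etaw a b \<equiv> wcls n (Gen (Eta a b))"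
abbreviation etaUw :: "nat \<Rightarrow> nat \<Rightarrow> wfam" where "etaUw a b \<equiv> wcls n (Gen (EtaU a b))"
abbreviation invw :: "complex poly \<Rightarrow> wfam" where "invw p \<equiv> wcls n (Gen (Inv p))"

lemma xw_out: "a \<notin> indices n \<Longrightarrow> xw a = 0"
  by (rule wcls_kill) (simp add: indices_def)
lemma dw_out: "a \<notin> indices n \<Longrightarrow> dw a = 0"
  by (rule wcls_kill) (simp add: indices_def)
lemma etaw_out: "a \<notin> indices n \<or> b \<notin> indices n \<Longrightarrow> etaw a b = 0"
  by (rule wcls_kill) (auto simp: indices_def)
lemma etaUw_out: "a \<notin> indices n \<or> b \<notin> indices n \<Longrightarrow> etaUw a b = 0"
  by (rule wcls_kill) (auto simp: indices_def)

lemma wcls_weq: "weq n a b \<Longrightarrow> wcls n a = wcls n b"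
  by (simp add: wcls_eq_iff)

lemma xw_commute: "xw a * xw b = xw b * xw a"
  using wcls_weq[OF weq.xx[of n a b]] unfolding wcls_Mul .
lemma dw_commute: "dw a * dw b = dw b * dw a"
  using wcls_weq[OF weq.dd[of n a b]] unfolding wcls_Mul .
lemma xw_left_commute: "xw a * (xw b * z) = xw b * (xw a * z)"
  by (metis xw_commute mult.assoc)
lemma dw_left_commute: "dw a * (dw b * z) = dw b * (dw a * z)"
  by (metis dw_commute mult.assoc)

lemma dw_xw: "dw a * xw b = xw b * dw a + (if a = b \<and> a \<in> indices n then wone n else 0)"
proof (cases "a \<in> indices n \<and> b \<in> indices n")
  case True
  then have "wcls n (esub (Mul (Gen (D a)) (Gen (X b))) (Mul (Gen (X b)) (Gen (D a))))
       = wcls n (Scal (if a = b then 1 else 0))"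
    by (intro wcls_weq weq.dx) (auto simp: indices_def)
  then have "dw a * xw b - xw b * dw a = (if a = b then wone n else 0)"
    unfolding wcls_esub wcls_Mul wcls_Scal by (simp add: wscalar_1 wscalar_0)
  then show ?thesis using True by (simp add: diff_eq_eq add.commute)
next
  case False
  then have "dw a = 0 \<or> xw b = 0" using xw_out dw_out by blast
  then show ?thesis using False by auto
qed

lemma dw_xw_mult:
  "dw a * (xw b * z) = xw b * (dw a * z) + (if a = b \<and> a \<in> indices n then wone n * z else 0)"
  by (simp add: dw_xw distrib_right if_zero_mult flip: mult.assoc)

lemma etaw_sym: "etaw a b = etaw b a"
  by (simp add: wcls_eq_iff weq.eta_sym)

lemma etaw_commute_gen: "is_wgen g \<Longrightarrow> etaw a b * wcls n (Gen g) = wcls n (Gen g) * etaw a b"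
  using wcls_weq[OF weq.eta_central[of g n a b]] unfolding wcls_Mul .
lemma etaUw_commute_gen: "is_wgen g \<Longrightarrow> etaUw a b * wcls n (Gen g) = wcls n (Gen g) * etaUw a b"
  using wcls_weq[OF weq.etaU_central[of g n a b]] unfolding wcls_Mul .

lemma etaw_etaUw_sum:
  "(\<Sum>b\<in>indices n. etaw a b * etaUw b c) = (if a = c \<and> a \<in> indices n then wone n else 0)"
proof (cases "a \<in> indices n \<and> c \<in> indices n")
  case True
  then have "wcls n (esum (\<lambda>b. Mul (Gen (Eta a b)) (Gen (EtaU b c))) (idx n))
       = wcls n (Scal (if a = c then 1 else 0))"
    by (intro wcls_weq weq.eta_inv) (auto simp: indices_def)
  then show ?thesis
    using True unfolding wcls_esum_indices wcls_Mul wcls_Scal by (simp add: wscalar_1 wscalar_0)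
next
  case False
  then have "\<And>b. etaw a b * etaUw b c = 0"
    using etaw_out etaUw_out by (metis mult_zero_left mult_zero_right)
  then show ?thesis using False by auto
qed

definition Hw :: wfam where
  "Hw = wscale (-1/2) (\<Sum>a\<in>indices n. xw a * dw a + dw a * xw a)"

lemma wcls_Hexpr: "wcls n (Hexpr n) = Hw"
  unfolding Hexpr_def wcls_Mul_Scal unfolding wcls_esum_indices wcls_Add wcls_Mul Hw_def ..

lemma Hw_mult_wone: "Hw * wone n = Hw"
  by (metis wcls_Hexpr wcls_mult_wone)

definition polyH :: "complex poly \<Rightarrow> wfam" where
  "polyH p = wcls n (evalH n p)"

lemma polyH_sum: "polyH p = (\<Sum>i<Suc (degree p). wscale (coeff p i) (wone n * Hw ^ i))"
proof -
  have "set [0..<Suc (degree p)] = {..<Suc (degree p)}" by auto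
  then show ?thesis
    unfolding polyH_def evalH_def wcls_esum wcls_Mul_Scal wcls_epow wcls_Hexpr
    by (metis sum_set_upt_conv_sum_list_nat)
qed

lemma polyH_mult_invw: "p \<noteq> 0 \<Longrightarrow> polyH p * invw p = wone n"
  using wcls_weq[OF weq.inv_l[of p n]] unfolding polyH_def wcls_Mul wcls_Scal wscalar_1 mult_1_left .
lemma invw_mult_polyH: "p \<noteq> 0 \<Longrightarrow> invw p * polyH p = wone n"
  using wcls_weq[OF weq.inv_r[of p n]] unfolding polyH_def wcls_Mul wcls_Scal wscalar_1 mult_1_left .

lemma commute_polyH:
  assumes "c * Hw = Hw * c"
  shows "c * polyH p = polyH p * c"
proof -
  have "c * (wone n * Hw ^ i) = (wone n * Hw ^ i) * c" for i
    by (metis assms mult.assoc power_commuting_commutes wone_commute)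
  then show ?thesis
    unfolding polyH_sum sum_distrib_left sum_distrib_right by (intro sum.cong) auto
qed

lemma commute_invw:
  assumes "c * polyH p = polyH p * c" and "c * wone n = c"
  shows "c * invw p = invw p * c"
proof (cases "p = 0")
  case True
  then show ?thesis using wcls_kill[of n "Inv p"] by simp
next
  case False
  have "invw p * c = invw p * c * (polyH p * invw p)"
    using polyH_mult_invw[OF False] assms(2) by (simp add: mult.assoc)
  also have "\<dots> = (invw p * polyH p) * c * invw p"
    using assms(1) by (metis mult.assoc)
  also have "\<dots> = c * invw p"
    using invw_mult_polyH[OF False] assms(2) wone_commute by metis
  finally show ?thesis by simp
qed

text \<open>
  The generators \<open>p(H)\<^sup>-\<^sup>1\<close> need no hypothesis: an element commuting with \<open>H\<close> commutes
  with \<open>p(H)\<close> and hence with its inverse.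
\<close>

lemma central_if_commutes_gens:
  assumes gens: "\<And>g. is_wgen g \<Longrightarrow> c * wcls n (Gen g) = wcls n (Gen g) * c"
    and corner: "c * wone n = c"
  shows "central c"
proof -
  have cH: "c * Hw = Hw * c"
    using gens[of "X _"] gens[of "D _"]
    by (simp add: Hw_def sum_distrib_left sum_distrib_right distrib_left distrib_right
        flip: mult.assoc) (simp add: mult.assoc)
  have "c * wcls n e = wcls n e * c" for e
  proof (induction e)
    case (Gen g)
    show ?case
      by (cases g) (auto intro: gens commute_invw[OF commute_polyH[OF cH] corner])
  next
    case (Scal x)
    show ?case
      by (simp add: wcls_Scal mult.assoc wone_commute flip: wscalar_commute)
        (metis mult.assoc wscalar_commute)
  next
    case (Add e1 e2)
    then show ?case by (simp add: wcls_Add distrib_left distrib_right)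
  next
    case (Mul e1 e2)
    then show ?case by (simp add: wcls_Mul flip: mult.assoc) (metis mult.assoc)
  qed
  then show ?thesis by (rule central_if_commutes_wcls[OF _ corner])
qed

lemma central_etaw: "central (etaw a b)"
  by (rule central_if_commutes_gens) (auto intro: etaw_commute_gen wcls_mult_wone)
lemma central_etaUw: "central (etaUw a b)"
  by (rule central_if_commutes_gens) (auto intro: etaUw_commute_gen wcls_mult_wone)

lemma etaUw_sym: "etaUw a c = etaUw c a"
proof (cases "a \<in> indices n \<and> c \<in> indices n")
  case False
  then show ?thesis using etaUw_out by auto
next
  case True
  have "etaUw c a = (\<Sum>b\<in>indices n. (\<Sum>d\<in>indices n. etaw b d * etaUw d c) * etaUw b a)"
    using True by (simp add: etaw_etaUw_sum if_zero_mult wone_mult_wcls)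
  also have "\<dots> = (\<Sum>d\<in>indices n. etaUw d c * (\<Sum>b\<in>indices n. etaw d b * etaUw b a))"
    unfolding sum_distrib_left sum_distrib_right
    by (subst sum.swap, intro sum.cong HOL.refl)
      (simp add: etaw_sym mult.assoc central_left_commute[OF central_etaUw])
  also have "\<dots> = etaUw a c"
    using True by (simp add: etaw_etaUw_sum mult_if_zero wcls_mult_wone)
  finally show ?thesis by simp
qed

lemma etaUw_etaw_sum:
  "(\<Sum>b\<in>indices n. etaUw a b * etaw b c) = (if a = c \<and> a \<in> indices n then wone n else 0)"
proof -
  have "etaUw a b * etaw b c = etaw c b * etaUw b a" for b
    by (metis etaUw_sym etaw_sym central_commute[OF central_etaw])
  then show ?thesis by (auto simp: etaw_etaUw_sum)
qed

lemma central_generator_commute: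
  "xw a * etaw b c = etaw b c * xw a" "xw a * (etaw b c * w) = etaw b c * (xw a * w)"
  "dw a * etaw b c = etaw b c * dw a" "dw a * (etaw b c * w) = etaw b c * (dw a * w)"
  "xw a * etaUw b c = etaUw b c * xw a" "xw a * (etaUw b c * w) = etaUw b c * (xw a * w)"
  "dw a * etaUw b c = etaUw b c * dw a" "dw a * (etaUw b c * w) = etaUw b c * (dw a * w)"
  "etaUw a d * etaw b c = etaw b c * etaUw a d"
  "etaUw a d * (etaw b c * w) = etaw b c * (etaUw a d * w)"
  "etaw a d * etaw b c = etaw b c * etaw a d" "etaw a d * (etaw b c * w) = etaw b c * (etaw a d * w)"
  "etaUw a d * etaUw b c = etaUw b c * etaUw a d"
  "etaUw a d * (etaUw b c * w) = etaUw b c * (etaUw a d * w)"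
  by (rule central_commute[OF central_etaw] central_left_commute[OF central_etaw]
      central_commute[OF central_etaUw] central_left_commute[OF central_etaUw])+

lemmas normalize_simps = central_generator_commute sum_if_const sum_distrib_left
  sum_distrib_right distrib_left distrib_right mult.assoc dw_xw dw_xw_mult xw_left_commute
  xw_commute dw_left_commute dw_commute sum.distrib mult_if_zero if_zero_mult wone_mult_wcls
  wcls_mult_wone wone_mult_wcls_mult wcls_mult_wone_mult left_diff_distrib right_diff_distrib
  sum_subtractf

definition d_up :: "nat \<Rightarrow> wfam" where
  "d_up a = (\<Sum>c\<in>indices n. etaUw a c * dw c)"

definition x_low :: "nat \<Rightarrow> wfam" where
  "x_low a = (\<Sum>b\<in>indices n. etaw a b * xw b)"

definition Ew :: wfam where
  "Ew = wscale (\<i>/2) (\<Sum>a\<in>indices n. dw a * d_up a)"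

definition Fw :: wfam where
  "Fw = wscale (\<i>/2) (\<Sum>a\<in>indices n. x_low a * xw a)"

lemma wcls_Eexpr: "wcls n (Eexpr n) = Ew"
  unfolding Eexpr_def wcls_Mul_Scal unfolding wcls_esum_indices wcls_Mul Ew_def d_up_def
  by (simp add: sum_distrib_left)

lemma wcls_Fexpr: "wcls n (Fexpr n) = Fw"
  unfolding Fexpr_def wcls_Mul_Scal unfolding wcls_esum_indices wcls_Mul Fw_def x_low_def
  by (simp add: sum_distrib_right)

lemma wone_mult_d_up: "wone n * d_up a = d_up a"
  unfolding d_up_def by (simp add: sum_distrib_left wone_mult_wcls_mult)

lemma d_up_mult_wone: "d_up a * wone n = d_up a"
  unfolding d_up_def by (simp add: sum_distrib_right mult.assoc wcls_mult_wone)

lemma Ew_mult_wone: "Ew * wone n = Ew"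
  by (metis wcls_Eexpr wcls_mult_wone)

lemma wone_mult_Ew: "wone n * Ew = Ew"
  by (metis wcls_Eexpr wone_mult_wcls)

lemma Fw_mult_wone: "Fw * wone n = Fw"
  by (metis wcls_Fexpr wcls_mult_wone)

lemma Hw_xw: "c \<in> indices n \<Longrightarrow> Hw * xw c = xw c * Hw - xw c"
proof -
  assume "c \<in> indices n"
  then have "Hw * xw c = xw c * Hw + wscale (-1/2) (xw c + xw c)"
    unfolding Hw_def by (simp add: normalize_simps)
  then show ?thesis by (simp add: add_self_eq_wscale_2 wscale_minus_one)
qed

lemma Hw_dw: "c \<in> indices n \<Longrightarrow> Hw * dw c = dw c * Hw + dw c"
proof -
  assume "c \<in> indices n"
  then have "Hw * dw c = dw c * Hw + wscale (1/2) (dw c + dw c)"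
    unfolding Hw_def by (simp add: normalize_simps wscale_uminus_left)
  then show ?thesis by (simp add: add_self_eq_wscale_2)
qed

lemma xw_x_low: "xw a * x_low b = x_low b * xw a"
  unfolding x_low_def by (simp add: normalize_simps)

lemma dw_d_up: "dw a * d_up b = d_up b * dw a"
  unfolding d_up_def by (simp add: normalize_simps)

lemma d_up_commute: "d_up a * d_up b = d_up b * d_up a"
  unfolding d_up_def by (simp add: normalize_simps) (subst sum.swap, simp add: normalize_simps)

lemma xw_Fw: "xw a * Fw = Fw * xw a"
proof -
  have "xw a * (x_low b * w) = x_low b * (xw a * w)" for b w
    by (simp add: xw_x_low flip: mult.assoc)
  then show ?thesis unfolding Fw_def by (simp add: normalize_simps)
qed

lemma dw_Fw: "c \<in> indices n \<Longrightarrow> dw c * Fw = Fw * dw c + wscale \<i> (x_low c)"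
proof -
  assume "c \<in> indices n"
  then have "dw c * Fw = Fw * dw c + wscale (\<i>/2) (x_low c + x_low c)"
    unfolding Fw_def x_low_def by (simp add: normalize_simps etaw_sym[of c])
  then show ?thesis by (simp add: add_self_eq_wscale_2)
qed

lemma Ew_xw: "c \<in> indices n \<Longrightarrow> Ew * xw c = xw c * Ew + wscale \<i> (d_up c)"
proof -
  assume "c \<in> indices n"
  then have "Ew * xw c = xw c * Ew + wscale (\<i>/2) (d_up c + d_up c)"
    unfolding Ew_def d_up_def by (simp add: normalize_simps etaUw_sym[of c])
  then show ?thesis by (simp add: add_self_eq_wscale_2)
qed

lemma d_up_Fw: "a \<in> indices n \<Longrightarrow> d_up a * Fw = Fw * d_up a + wscale \<i> (xw a)"
proof -
  assume a: "a \<in> indices n"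
  have "d_up a * Fw = (\<Sum>c\<in>indices n. etaUw a c * (dw c * Fw))"
    unfolding d_up_def by (simp add: sum_distrib_right mult.assoc)
  also have "\<dots> = (\<Sum>c\<in>indices n. etaUw a c * (Fw * dw c) + wscale \<i> (etaUw a c * x_low c))"
    by (intro sum.cong HOL.refl) (simp add: dw_Fw distrib_left)
  also have "\<dots> = Fw * d_up a + wscale \<i> (\<Sum>c\<in>indices n. etaUw a c * x_low c)"
    unfolding d_up_def
    by (simp add: sum.distrib sum_distrib_left wscale_sum central_left_commute[OF central_etaUw])
  also have "(\<Sum>c\<in>indices n. etaUw a c * x_low c)
      = (\<Sum>b\<in>indices n. (\<Sum>c\<in>indices n. etaUw a c * etaw c b) * xw b)"
    unfolding x_low_def sum_distrib_left sum_distrib_right mult.assoc by (rule sum.swap)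
  also have "\<dots> = xw a"
    using a by (simp add: etaUw_etaw_sum if_zero_mult wone_mult_wcls)
  finally show ?thesis .
qed

lemma Ew_d_up: "Ew * d_up c = d_up c * Ew"
proof -
  have "dw a * (d_up a * d_up c) = d_up c * (dw a * d_up a)" for a
    by (metis d_up_commute dw_d_up mult.assoc)
  then show ?thesis
    unfolding Ew_def by (simp add: sum_distrib_left sum_distrib_right mult.assoc)
qed

lemma sum_x_low_d_up: "(\<Sum>a\<in>indices n. x_low a * d_up a) = (\<Sum>a\<in>indices n. xw a * dw a)"
proof -
  have "(\<Sum>a\<in>indices n. x_low a * d_up a)
      = (\<Sum>b\<in>indices n. \<Sum>c\<in>indices n. \<Sum>a\<in>indices n. etaw b a * etaUw a c * (xw b * dw c))"
    unfolding x_low_def d_up_def sum_distrib_left sum_distrib_right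
    by (subst sum.swap, subst (2) sum.swap, rule sum.cong[OF HOL.refl],
        subst sum.swap, simp add: normalize_simps etaw_sym)
  also have "\<dots> = (\<Sum>b\<in>indices n. \<Sum>c\<in>indices n. (\<Sum>a\<in>indices n. etaw b a * etaUw a c) * (xw b * dw c))"
    unfolding sum_distrib_right ..
  also have "\<dots> = (\<Sum>b\<in>indices n. xw b * dw b)"
    by (simp add: etaw_etaUw_sum if_zero_mult wone_mult_wcls wone_mult_wcls_mult)
  finally show ?thesis .
qed

lemma Ew_Fw: "Ew * Fw = Fw * Ew + Hw"
proof -
  have "Ew * Fw = wscale (\<i>/2) (\<Sum>a\<in>indices n. dw a * (d_up a * Fw))"
    unfolding Ew_def by (simp add: sum_distrib_right mult.assoc)
  also have "\<dots> = wscale (\<i>/2) (\<Sum>a\<in>indices n. Fw * (dw a * d_up a)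
      + wscale \<i> (x_low a * d_up a) + wscale \<i> (dw a * xw a))"
    by (intro arg_cong[where f="wscale (\<i>/2)"] sum.cong HOL.refl)
      (simp add: d_up_Fw dw_Fw distrib_left distrib_right flip: mult.assoc)
  also have "\<dots> = Fw * Ew + wscale (-1/2)
      ((\<Sum>a\<in>indices n. x_low a * d_up a) + (\<Sum>a\<in>indices n. dw a * xw a))"
    unfolding Ew_def by (simp add: sum.distrib wscale_sum sum_distrib_left)
  also have "\<dots> = Fw * Ew + Hw"
    unfolding sum_x_low_d_up Hw_def by (simp add: sum.distrib)
  finally show ?thesis .
qed

lemma xw_Fw_power: "xw a * Fw ^ k = Fw ^ k * xw a"
  using power_commuting_commutes[OF xw_Fw[of a, symmetric], of k] by simp

lemma d_up_Fw_power: "a \<in> indices n \<Longrightarrow>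
  d_up a * Fw ^ Suc k = Fw ^ Suc k * d_up a + wscale (of_nat (Suc k) * \<i>) (xw a * Fw ^ k)"
proof (induction k)
  case 0
  then show ?case by (simp add: d_up_Fw)
next
  case (Suc k)
  have "d_up a * Fw ^ Suc (Suc k) = (d_up a * Fw ^ Suc k) * Fw"
    by (simp only: power_Suc2 mult.assoc)
  also have "\<dots> = Fw ^ Suc k * (d_up a * Fw) + wscale (of_nat (Suc k) * \<i>) (xw a * (Fw ^ k * Fw))"
    unfolding Suc.IH[OF Suc.prems] by (simp add: distrib_right mult.assoc power_commutes)
  also have "\<dots> = Fw ^ Suc (Suc k) * d_up a + wscale \<i> (Fw ^ Suc k * xw a)
       + wscale (of_nat (Suc k) * \<i>) (xw a * Fw ^ Suc k)"
    unfolding d_up_Fw[OF Suc.prems]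
    by (simp add: distrib_left mult.assoc power_commutes power_mult_left_commute)
  also have "\<dots> = Fw ^ Suc (Suc k) * d_up a + wscale (of_nat (Suc (Suc k)) * \<i>) (xw a * Fw ^ Suc k)"
    unfolding xw_Fw_power[symmetric] by (simp add: add.assoc wscale_add_left[symmetric] algebra_simps)
  finally show ?case .
qed

lemma Fw_d_up_Fw_power: "a \<in> indices n \<Longrightarrow>
  Fw * (d_up a * Fw ^ k) = Fw ^ Suc k * d_up a + wscale (of_nat k * \<i>) (xw a * Fw ^ k)"
proof (cases k)
  case (Suc j)
  assume a: "a \<in> indices n"
  have "Fw * (d_up a * Fw ^ k)
      = Fw * Fw ^ Suc j * d_up a + wscale (of_nat (Suc j) * \<i>) (Fw * xw a * Fw ^ j)"
    unfolding Suc d_up_Fw_power[OF a] by (simp add: distrib_left mult.assoc)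
  also have "Fw * xw a * Fw ^ j = xw a * Fw ^ Suc j"
    by (metis xw_Fw mult.assoc power_Suc)
  finally show ?thesis unfolding Suc by simp
qed simp

section \<open>Polynomials in \<open>H\<close>\<close>

definition H_shift :: "complex \<Rightarrow> wfam \<Rightarrow> bool" where
  "H_shift c Z \<longleftrightarrow> Z * Hw = (Hw + wscale c (wone n)) * Z"

lemma H_shift_xw: "H_shift 1 (xw a)"
proof (cases "a \<in> indices n")
  case True
  then show ?thesis
    unfolding H_shift_def by (simp add: Hw_xw distrib_right wone_mult_wcls)
next
  case False
  then show ?thesis by (simp add: H_shift_def xw_out)
qed

lemma H_shift_dw: "H_shift (-1) (dw a)"
proof (cases "a \<in> indices n")
  case True
  then show ?thesis
    unfolding H_shift_def by (simp add: Hw_dw wscale_minus_one left_diff_distrib wone_mult_wcls)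
next
  case False
  then show ?thesis by (simp add: H_shift_def dw_out)
qed

lemma H_shift_mult:
  assumes "H_shift c1 Z1" "H_shift c2 Z2" "wone n * Z2 = Z2"
  shows "H_shift (c1 + c2) (Z1 * Z2)"
proof -
  have corner: "wone n * (Z1 * Z2) = Z1 * Z2"
    using assms(3) by (metis mult.assoc wone_commute)
  have "Z1 * Z2 * Hw = Z1 * (Hw + wscale c2 (wone n)) * Z2"
    using assms(2) unfolding H_shift_def by (simp add: mult.assoc)
  also have "\<dots> = (Hw + wscale c1 (wone n)) * Z1 * Z2 + wscale c2 (Z1 * Z2)"
    using assms(1,3) unfolding H_shift_def by (simp add: distrib_left distrib_right mult.assoc)
  also have "\<dots> = (Hw + wscale (c1 + c2) (wone n)) * (Z1 * Z2)"
    using corner by (simp add: distrib_right wscale_add_left mult.assoc add.assoc)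
  finally show ?thesis unfolding H_shift_def .
qed

lemma H_shift_sum: "(\<And>i. i \<in> A \<Longrightarrow> H_shift c (f i)) \<Longrightarrow> H_shift c (sum f A)"
proof (induction A rule: infinite_finite_induct)
  case (insert x F)
  then show ?case by (simp add: H_shift_def distrib_left distrib_right)
qed (simp_all add: H_shift_def)

lemma H_shift_wscale: "H_shift c Z \<Longrightarrow> H_shift c (wscale d Z)"
  unfolding H_shift_def by simp

lemma H_shift_central: "central Z \<Longrightarrow> H_shift 0 Z"
  unfolding H_shift_def by (simp add: central_def)

lemma H_shift_d_up: "H_shift (-1) (d_up a)"
  unfolding d_up_def
  by (rule H_shift_sum) (metis add_0 H_shift_mult H_shift_central central_etaUw H_shift_dw
      wone_mult_wcls)

lemma H_shift_x_low: "H_shift 1 (x_low a)"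
  unfolding x_low_def
  by (rule H_shift_sum) (metis add_0 H_shift_mult H_shift_central central_etaw H_shift_xw
      wone_mult_wcls)

lemma H_shift_Fw: "H_shift 2 Fw"
  unfolding Fw_def
  by (intro H_shift_wscale H_shift_sum)
    (metis one_add_one H_shift_mult H_shift_x_low H_shift_xw wone_mult_wcls)

lemma H_shift_Ew: "H_shift (-2) Ew"
  unfolding Ew_def
  by (intro H_shift_wscale H_shift_sum)
    (metis H_shift_mult H_shift_dw H_shift_d_up wone_mult_d_up add_uminus_conv_diff
      diff_minus_eq_add minus_add_distrib one_add_one)

lemma polyH_eq_sum:
  "degree p < N \<Longrightarrow> polyH p = (\<Sum>i<N. wscale (coeff p i) (wone n * Hw ^ i))"
  unfolding polyH_sum by (rule sum.mono_neutral_right[symmetric]) (auto simp: coeff_eq_0)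

lemma polyH_0: "polyH 0 = 0"
  by (simp add: polyH_sum)

lemma polyH_add: "polyH (p + q) = polyH p + polyH q"
proof -
  define N where "N = Suc (max (degree p) (degree q))"
  have "degree (p + q) < N" unfolding N_def using degree_add_le_max[of p q] by linarith
  then show ?thesis
    using polyH_eq_sum[of "p + q" N] polyH_eq_sum[of p N] polyH_eq_sum[of q N] unfolding N_def
    by (simp add: wscale_add_left sum.distrib)
qed

lemma polyH_smult: "polyH (smult c p) = wscale c (polyH p)"
proof -
  have "degree (smult c p) < Suc (degree p)" using degree_smult_le[of c p] by linarith
  then show ?thesis using polyH_eq_sum[of "smult c p"] polyH_sum[of p]
    by (simp add: wscale_sum)
qed

lemma polyH_pCons: "polyH (pCons a p) = wscale a (wone n) + Hw * polyH p"
proof -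
  have "degree (pCons a p) < Suc (Suc (degree p))"
    by (metis degree_pCons_le le_imp_less_Suc)
  then have "polyH (pCons a p)
      = (\<Sum>i<Suc (Suc (degree p)). wscale (coeff (pCons a p) i) (wone n * Hw ^ i))"
    by (rule polyH_eq_sum)
  also have "\<dots> = wscale a (wone n)
      + (\<Sum>i<Suc (degree p). wscale (coeff p i) (wone n * Hw ^ Suc i))"
    by (subst sum.lessThan_Suc_shift) simp
  also have "(\<Sum>i<Suc (degree p). wscale (coeff p i) (wone n * Hw ^ Suc i)) = Hw * polyH p"
    unfolding polyH_sum sum_distrib_left by (simp add: wone_commute mult.assoc)
  finally show ?thesis .
qed

lemma polyH_const: "polyH [:c:] = wscale c (wone n)"
  by (simp add: polyH_pCons polyH_0)

lemma polyH_linear: "polyH [:c, 1:] = Hw + wscale c (wone n)"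
  by (simp add: polyH_pCons polyH_0 polyH_const Hw_mult_wone add.commute)

lemma wone_mult_polyH: "wone n * polyH p = polyH p"
  unfolding polyH_def by (rule wone_mult_wcls)

lemma polyH_mult: "polyH (p * q) = polyH p * polyH q"
proof (induction p)
  case 0
  then show ?case by (simp add: polyH_0)
next
  case (pCons a p)
  then show ?case
    by (simp add: polyH_add polyH_smult polyH_pCons distrib_right mult.assoc wone_mult_polyH)
qed

lemma polyH_H_shift:
  assumes "H_shift c Z"
  shows "Z * polyH p = polyH (pcompose p [:c, 1:]) * Z"
proof (induction p)
  case 0
  then show ?case by (simp add: polyH_0)
next
  case (pCons a p)
  have "Z * polyH (pCons a p) = wscale a (Z * wone n) + (Z * Hw) * polyH p"
    by (simp add: polyH_pCons distrib_left mult.assoc)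
  also have "\<dots> = wscale a (wone n * Z) + (Hw + wscale c (wone n)) * (Z * polyH p)"
    using assms unfolding H_shift_def by (simp add: wone_commute mult.assoc)
  also have "\<dots> = polyH (pcompose (pCons a p) [:c, 1:]) * Z"
    by (simp only: pcompose_pCons polyH_add polyH_mult polyH_const polyH_linear pCons.IH)
      (simp add: distrib_right mult.assoc)
  finally show ?case .
qed

lemma invw_H_shift:
  assumes "H_shift c Z" "Z * wone n = Z" "p \<noteq> 0"
  shows "Z * invw p = invw (pcompose p [:c, 1:]) * Z"
proof -
  define q where "q = pcompose p [:c, 1:]"
  have "q \<noteq> 0" unfolding q_def using assms(3) pcompose_eq_0[of p "[:c,1:]"] by auto
  have "invw q * Z = invw q * Z * (polyH p * invw p)"
    using polyH_mult_invw[OF assms(3)] assms(2) by (simp add: mult.assoc)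
  also have "\<dots> = invw q * (Z * polyH p) * invw p"
    by (simp add: mult.assoc)
  also have "\<dots> = (invw q * polyH q) * Z * invw p"
    unfolding polyH_H_shift[OF assms(1)] q_def by (simp add: mult.assoc)
  also have "\<dots> = Z * invw p"
    using invw_mult_polyH[OF \<open>q \<noteq> 0\<close>] assms(2) wone_commute[of n Z] by simp
  finally show ?thesis unfolding q_def by simp
qed

lemma invw_mult:
  assumes "p \<noteq> 0" "q \<noteq> 0"
  shows "invw (p * q) = invw p * invw q"
proof -
  have "invw p * invw q = invw p * invw q * (polyH (q * p) * invw (p * q))"
    using polyH_mult_invw[of "p * q"] assms by (simp add: mult.commute wcls_mult_wone mult.assoc)
  also have "\<dots> = invw p * (invw q * polyH q) * polyH p * invw (p * q)"
    by (simp add: polyH_mult mult.assoc)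
  also have "\<dots> = (invw p * polyH p) * invw (p * q)"
    using invw_mult_polyH[OF assms(2)] by (simp add: mult.assoc wcls_mult_wone_mult)
  also have "\<dots> = invw (p * q)"
    using invw_mult_polyH[OF assms(1)] by (simp add: wone_mult_wcls)
  finally show ?thesis by simp
qed

lemma invw_1: "invw 1 = wone n"
proof -
  have "polyH 1 = wone n" using polyH_const[of 1] by (simp add: one_pCons)
  then show ?thesis using polyH_mult_invw[of 1] by (simp add: wone_mult_wcls)
qed

abbreviation fH :: "nat \<Rightarrow> wfam" where "fH k \<equiv> invw (fpoly k)"
abbreviation fH1 :: "nat \<Rightarrow> wfam" where "fH1 k \<equiv> invw (pcompose (fpoly k) [:1, 1:])"

lemma fH_0: "fH 0 = wone n"
  by (simp add: fpoly_0 invw_1)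

lemma fH_1_mult_fH1: "fH 1 * fH1 k = fH (Suc k)"
  unfolding fpoly_Suc_pcompose[of k] fpoly_1
  by (rule invw_mult[symmetric]) (simp_all add: fpoly_nonzero pcompose_linear_nonzero)

lemma invw_mult_commute: "p \<noteq> 0 \<Longrightarrow> q \<noteq> 0 \<Longrightarrow> invw p * invw q = invw q * invw p"
  by (metis invw_mult mult.commute)

lemma invw_linear_cancel: "x * invw [:c, 1:] * polyH [:c, 1:] = x * wone n"
  by (simp add: mult.assoc invw_mult_polyH)

text \<open>Both sides times \<open>(H+2)\<cdots>(H+k+2)\<close> become \<open>(H+2) + k = H+k+2\<close>.\<close>

lemma fH1_add_fH_Suc: "fH1 k + wscale (of_nat k) (fH (Suc k)) = fH k"
proof -
  have nz: "fpoly k \<noteq> 0" "pcompose (fpoly k) [:1, 1:] \<noteq> 0"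
    "[:2, 1::complex:] \<noteq> 0" "[:of_nat (k+2), 1::complex:] \<noteq> 0"
    by (simp_all add: fpoly_nonzero pcompose_linear_nonzero)
  have fH1: "fH (Suc k) * polyH [:2, 1:] = fH1 k"
  proof -
    have "fH (Suc k) = fH1 k * invw [:2, 1:]"
      unfolding fpoly_Suc_pcompose[of k] invw_mult[OF nz(3,2)] by (rule invw_mult_commute[OF nz(3,2)])
    then show ?thesis by (simp add: invw_linear_cancel wcls_mult_wone)
  qed
  have fH: "fH (Suc k) * polyH [:of_nat (k+2), 1:] = fH k"
  proof -
    have "fH (Suc k) = fH k * invw [:of_nat (k+2), 1:]"
      unfolding fpoly_Suc[of k] by (rule invw_mult[OF nz(1,4)])
    then show ?thesis by (simp add: invw_linear_cancel wcls_mult_wone)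
  qed
  have "polyH [:2, 1:] + wscale (of_nat k) (wone n) = polyH [:of_nat (k+2), 1:]"
    by (simp add: polyH_linear add.assoc wscale_add_left[symmetric] add.commute)
  then have "fH1 k + wscale (of_nat k) (fH (Suc k)) = fH (Suc k) * polyH [:of_nat (k+2), 1:]"
    by (metis fH1 distrib_left mult_wscale wcls_mult_wone)
  then show ?thesis by (simp only: fH)
qed

lemma xw_fH: "xw a * fH k = fH1 k * xw a"
  by (rule invw_H_shift[OF H_shift_xw wcls_mult_wone fpoly_nonzero])

lemma Fw_d_up_fH: "Fw * (d_up a * fH k) = fH1 k * (Fw * d_up a)"
proof -
  have "Fw * (d_up a * fH k) = (Fw * invw (pcompose (fpoly k) [:-1, 1:])) * d_up a"
    by (simp add: invw_H_shift[OF H_shift_d_up d_up_mult_wone fpoly_nonzero] mult.assoc)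
  also have "Fw * invw (pcompose (fpoly k) [:-1, 1:])
      = invw (pcompose (pcompose (fpoly k) [:-1, 1:]) [:2, 1:]) * Fw"
    by (rule invw_H_shift[OF H_shift_Fw Fw_mult_wone pcompose_linear_nonzero[OF fpoly_nonzero]])
  also have "pcompose (pcompose (fpoly k) [:-1, 1:]) [:2, 1:] = pcompose (fpoly k) [:1, 1:]"
    by (simp only: pcompose_assoc[symmetric] pcompose_linear) simp
  finally show ?thesis by (simp only: mult.assoc)
qed

lemma Ew_fH_1: "Ew * fH 1 = invw [:0, 1:] * Ew"
proof -
  have "Ew * fH 1 = invw (pcompose (fpoly 1) [:-2, 1:]) * Ew"
    by (rule invw_H_shift[OF H_shift_Ew Ew_mult_wone fpoly_nonzero])
  also have "pcompose (fpoly 1) [:-2, 1:] = [:0, 1:]"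
    by (simp only: fpoly_1 pcompose_linear) simp
  finally show ?thesis .
qed

lemma invw_H_mult_Hw: "invw [:0, 1:] * Hw = wone n"
  using invw_mult_polyH[of "[:0, 1:]"] polyH_linear[of 0] by simp

section \<open>Nilpotency of \<open>ad E\<close> on \<open>x\<close>-monomials\<close>

definition adw :: "wfam \<Rightarrow> wfam" where
  "adw z = Ew * z - z * Ew"

lemma adw_mult: "adw (z * w) = adw z * w + z * adw w"
  unfolding adw_def by (simp add: algebra_simps)
lemma adw_add: "adw (z + w) = adw z + adw w"
  unfolding adw_def by (simp add: algebra_simps)
lemma adw_wscale: "adw (wscale c z) = wscale c (adw z)"
  unfolding adw_def by simp
lemma adw_xw: "a \<in> indices n \<Longrightarrow> adw (xw a) = wscale \<i> (d_up a)"
  unfolding adw_def by (simp add: Ew_xw)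
lemma adw_d_up: "adw (d_up a) = 0"
  unfolding adw_def by (simp add: Ew_d_up)
lemma adw_wone: "adw (wone n) = 0"
  unfolding adw_def wcls_Eexpr[symmetric] by (simp add: wone_mult_wcls wcls_mult_wone)

lemma adw_power_zero: "(adw ^^ k) 0 = 0"
  by (induction k) (simp_all add: adw_def)

lemma adw_power_xw_mult: "a \<in> indices n \<Longrightarrow> (adw ^^ Suc k) (xw a * z)
    = xw a * (adw ^^ Suc k) z + wscale (of_nat (Suc k) * \<i>) (d_up a * (adw ^^ k) z)"
proof (induction k)
  case 0
  then show ?case by (simp add: adw_mult adw_xw add.commute)
next
  case (Suc k)
  have "(adw ^^ Suc (Suc k)) (xw a * z) = xw a * (adw ^^ Suc (Suc k)) z
      + wscale \<i> (d_up a * (adw ^^ Suc k) z)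
      + wscale (of_nat (Suc k) * \<i>) (d_up a * (adw ^^ Suc k) z)"
    using Suc.IH[OF Suc.prems]
    by (simp add: adw_add adw_wscale adw_mult adw_xw[OF Suc.prems] adw_d_up add.commute)
  then show ?case
    by (simp add: add.assoc wscale_add_left[symmetric] algebra_simps)
qed

definition xmono_w :: "nat list \<Rightarrow> wfam" where
  "xmono_w as = foldr (\<lambda>a z. xw a * z) as (wone n)"

lemma wcls_xmono: "wcls n (xmono as) = xmono_w as"
  unfolding xmono_def xmono_w_def wcls_eprod by (simp add: foldr_map comp_def)


lemma adw_power_xmono_w:
  "set as \<subseteq> indices n \<Longrightarrow> length as < k \<Longrightarrow> (adw ^^ k) (xmono_w as) = 0"
proof (induction as arbitrary: k)
  case Nil
  then obtain j where "k = Suc j" by (cases k) auto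
  moreover have "xmono_w [] = wone n" by (simp add: xmono_w_def)
  ultimately show ?case by (simp only: funpow_Suc_right o_apply adw_wone adw_power_zero)
next
  case (Cons a as)
  then obtain j where k: "k = Suc j" and j: "length as < j" by (cases k) auto
  have a: "a \<in> indices n" and s: "set as \<subseteq> indices n" using Cons.prems by auto
  show ?case
    using adw_power_xw_mult[OF a, of j "xmono_w as"] Cons.IH[OF s j] Cons.IH[OF s, of "Suc j"] j
    unfolding k by (simp add: xmono_w_def)
qed

lemma adw_power_xw: "a \<in> indices n \<Longrightarrow> 1 < j \<Longrightarrow> (adw ^^ j) (xw a) = 0"
  using adw_power_xmono_w[of "[a]" j] by (simp add: xmono_w_def wcls_mult_wone)

section \<open>Partial sums of the extremal projector\<close>

lemma wcls_adE_power: "wcls n ((adE n ^^ k) w) = (adw ^^ k) (wcls n w)"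
  by (induction k) (simp_all add: adE_def adw_def wcls_esub wcls_Mul wcls_Eexpr)

definition proj_trunc :: "nat \<Rightarrow> wfam \<Rightarrow> wfam" where
  "proj_trunc K z = (\<Sum>k\<le>K. wscale (proj_coeff k) (fH k * (Fw ^ k * (adw ^^ k) z)))"

lemma wcls_Ptrunc: "wcls n (Ptrunc n K w) = proj_trunc K (wcls n w)"
proof -
  have "set [0..<Suc K] = {..K}" by auto
  moreover have "wcls n (Ptrunc n K w) = sum_list (map (\<lambda>k. wscale (proj_coeff k)
      (fH k * (Fw ^ k * (adw ^^ k) (wcls n w)))) [0..<Suc K])"
    unfolding Ptrunc_def wcls_esum wcls_Mul_Scal
    unfolding wcls_Mul wcls_epow wcls_Fexpr wcls_adE_power proj_coeff_def[symmetric]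
    by (simp add: mult.assoc wcls_mult_wone_mult)
  ultimately show ?thesis
    unfolding proj_trunc_def by (metis sum_set_upt_conv_sum_list_nat)
qed

lemma proj_trunc_stable:
  assumes "\<And>j. L < j \<Longrightarrow> (adw ^^ j) z = 0" and "L \<le> K"
  shows "proj_trunc K z = proj_trunc L z"
  unfolding proj_trunc_def by (rule sum.mono_neutral_right) (use assms in auto)

lemma proj_trunc_0_wone: "proj_trunc 0 (wone n) = wone n"
  unfolding proj_trunc_def by (simp add: proj_coeff_def fH_0 wone_idem)

lemma proj_trunc_1_xw:
  "a \<in> indices n \<Longrightarrow> proj_trunc 1 (xw a) = xw a - wscale \<i> (fH 1 * (Fw * d_up a))"
  unfolding proj_trunc_def
  by (simp add: proj_coeff_def fH_0 wone_mult_wcls adw_xw wscale_minus_one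
      wscale_uminus_left[symmetric])

text \<open>
  Moving \<open>x\<^sup>a\<close> and \<open>\<partial>\<^sup>a\<close> to the right produces two multiples of \<open>F\<^sup>k x\<^sup>a y\<close>, with
  coefficients \<open>f\<^sub>k(H+1)\<close> and \<open>k f\<^sub>k\<^sub>+\<^sub>1(H)\<close>; they add up to \<open>f\<^sub>k(H)\<close>.
\<close>

lemma proj_xw_mult_summand:
  assumes a: "a \<in> indices n"
  shows "(xw a - wscale \<i> (fH 1 * (Fw * d_up a))) * (fH k * (Fw ^ k * y))
    = fH k * (Fw ^ k * (xw a * y)) - wscale \<i> (fH (Suc k) * (Fw ^ Suc k * (d_up a * y)))"
proof -
  define R where "R = Fw ^ k * (xw a * y)"
  have "xw a * (fH k * (Fw ^ k * y)) = fH1 k * ((xw a * Fw ^ k) * y)"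
    by (simp only: xw_fH mult.assoc[symmetric])
  then have x_term: "xw a * (fH k * (Fw ^ k * y)) = fH1 k * R"
    unfolding R_def xw_Fw_power by (simp only: mult.assoc)
  have "fH 1 * (Fw * d_up a) * (fH k * (Fw ^ k * y)) = fH 1 * (Fw * (d_up a * fH k)) * (Fw ^ k * y)"
    by (simp only: mult.assoc)
  also have "\<dots> = (fH 1 * fH1 k) * (Fw * (d_up a * Fw ^ k)) * y"
    by (simp only: Fw_d_up_fH mult.assoc)
  also have "\<dots> = fH (Suc k) * (Fw ^ Suc k * d_up a + wscale (of_nat k * \<i>) (xw a * Fw ^ k)) * y"
    unfolding fH_1_mult_fH1 Fw_d_up_Fw_power[OF a] ..
  also have "\<dots> = fH (Suc k) * (Fw ^ Suc k * (d_up a * y)) + wscale (of_nat k * \<i>) (fH (Suc k) * R)"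
    unfolding R_def by (simp add: distrib_left distrib_right mult.assoc xw_Fw_power flip: mult.assoc)
  finally have d_term: "fH 1 * (Fw * d_up a) * (fH k * (Fw ^ k * y))
      = fH (Suc k) * (Fw ^ Suc k * (d_up a * y)) + wscale (of_nat k * \<i>) (fH (Suc k) * R)" .
  have "\<i> * (of_nat k * \<i>) = - (of_nat k :: complex)"
    by (simp add: algebra_simps)
  then have "(xw a - wscale \<i> (fH 1 * (Fw * d_up a))) * (fH k * (Fw ^ k * y))
      = (fH1 k + wscale (of_nat k) (fH (Suc k))) * R
        - wscale \<i> (fH (Suc k) * (Fw ^ Suc k * (d_up a * y)))"
    unfolding left_diff_distrib x_term wscale_mult_left d_term
    by (simp add: distrib_right algebra_simps wscale_uminus_left)
  then show ?thesis
    unfolding fH1_add_fH_Suc R_def .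
qed

text \<open>
  Summing over \<open>k\<close>, the subtracted terms of index \<open>k\<close> pair with the terms of index
  \<open>k+1\<close> coming from \<open>(ad E)\<^sup>k\<^sup>+\<^sup>1(x\<^sup>a z) = x\<^sup>a (ad E)\<^sup>k\<^sup>+\<^sup>1 z + (k+1) i \<partial>\<^sup>a (ad E)\<^sup>k z\<close>.
\<close>

lemma proj_trunc_xw_mult:
  assumes a: "a \<in> indices n" and z: "\<And>j. K < j \<Longrightarrow> (adw ^^ j) z = 0"
  shows "proj_trunc 1 (xw a) * proj_trunc K z = proj_trunc (Suc K) (xw a * z)"
proof -
  define A where "A k = wscale (proj_coeff k) (fH k * (Fw ^ k * (xw a * (adw ^^ k) z)))" for k
  define B where "B k = wscale (proj_coeff k * \<i>)
      (fH (Suc k) * (Fw ^ Suc k * (d_up a * (adw ^^ k) z)))" for k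
  have lhs: "proj_trunc 1 (xw a) * proj_trunc K z = (\<Sum>k\<le>K. A k - B k)"
    unfolding proj_trunc_1_xw[OF a] proj_trunc_def[of K] sum_distrib_left mult_wscale
      proj_xw_mult_summand[OF a] A_def B_def
    by simp
  have summand_Suc: "wscale (proj_coeff (Suc k))
      (fH (Suc k) * (Fw ^ Suc k * (adw ^^ Suc k) (xw a * z))) = A (Suc k) - B k" for k
  proof -
    have "wscale (proj_coeff (Suc k)) (fH (Suc k) * (Fw ^ Suc k * (adw ^^ Suc k) (xw a * z)))
      = A (Suc k) + wscale (proj_coeff (Suc k) * (of_nat (Suc k) * \<i>))
          (fH (Suc k) * (Fw ^ Suc k * (d_up a * (adw ^^ k) z)))"
      unfolding adw_power_xw_mult[OF a] A_def by (simp add: distrib_left)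
    then show ?thesis
      unfolding proj_coeff_Suc B_def wscale_uminus_left by simp
  qed
  have "proj_trunc (Suc K) (xw a * z) = A 0 + (\<Sum>k\<le>K. A (Suc k) - B k)"
    unfolding proj_trunc_def sum.atMost_Suc_shift summand_Suc by (simp add: A_def)
  also have "\<dots> = (\<Sum>k\<le>Suc K. A k) - (\<Sum>k\<le>K. B k)"
    unfolding sum_subtractf sum.atMost_Suc_shift[of A] by simp
  also have "\<dots> = (\<Sum>k\<le>K. A k) - (\<Sum>k\<le>K. B k)"
    using z[of "Suc K"] by (simp add: A_def)
  finally show ?thesis
    unfolding lhs sum_subtractf by simp
qed

lemma prod_proj_trunc_xw: "set as \<subseteq> indices n \<Longrightarrow>
  foldr (*) (map (\<lambda>a. proj_trunc 1 (xw a)) as) (wone n) = proj_trunc (length as) (xmono_w as)"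
proof (induction as)
  case Nil
  then show ?case by (simp add: xmono_w_def proj_trunc_0_wone)
next
  case (Cons a as)
  then have "foldr (*) (map (\<lambda>a. proj_trunc 1 (xw a)) (a # as)) (wone n)
      = proj_trunc 1 (xw a) * proj_trunc (length as) (xmono_w as)"
    by simp
  also have "\<dots> = proj_trunc (Suc (length as)) (xw a * xmono_w as)"
    using Cons.prems by (intro proj_trunc_xw_mult adw_power_xmono_w) auto
  finally show ?case by (simp add: xmono_w_def)
qed

section \<open>The left ideal \<open>I\<close> and its normalizer\<close>

definition in_I :: "wfam \<Rightarrow> bool" where
  "in_I z \<longleftrightarrow> (\<exists>y. z = y * Ew)"

definition in_N :: "wfam \<Rightarrow> bool" where
  "in_N z \<longleftrightarrow> in_I (Ew * z)"

lemma inI_iff_in_I: "inI n m \<longleftrightarrow> in_I (wcls n m)"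
proof
  assume "inI n m"
  then obtain y where "weq n m (Mul y (Eexpr n))" unfolding inI_def by blast
  then have "wcls n m = wcls n y * Ew" unfolding wcls_eq_iff[symmetric] wcls_Mul wcls_Eexpr .
  then show "in_I (wcls n m)" unfolding in_I_def by blast
next
  assume "in_I (wcls n m)"
  then obtain y where y: "wcls n m = y * Ew" unfolding in_I_def by blast
  obtain e where e: "y * wone n = wcls n e" using mult_wone_eq_wcls by blast
  have "wcls n m = wcls n (Mul e (Eexpr n))"
    unfolding wcls_Mul wcls_Eexpr e[symmetric] y by (simp add: mult.assoc wone_mult_Ew)
  then show "inI n m" unfolding inI_def wcls_eq_iff by blast
qed

lemma in_I_0: "in_I 0"
  unfolding in_I_def by (rule exI[of _ 0]) simp

lemma in_I_add: "in_I a \<Longrightarrow> in_I b \<Longrightarrow> in_I (a + b)"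
  unfolding in_I_def by (metis distrib_right)

lemma in_I_uminus: "in_I a \<Longrightarrow> in_I (- a)"
  unfolding in_I_def by (metis minus_mult_left)

lemma in_I_mult_left: "in_I a \<Longrightarrow> in_I (w * a)"
  unfolding in_I_def by (metis mult.assoc)

lemma in_I_mult_in_N: "in_I a \<Longrightarrow> in_N z \<Longrightarrow> in_I (a * z)"
  unfolding in_N_def in_I_def by (metis mult.assoc)

lemma in_N_mult: "in_N z \<Longrightarrow> in_N w \<Longrightarrow> in_N (z * w)"
  unfolding in_N_def by (metis in_I_mult_in_N in_N_def mult.assoc)

lemma in_N_wone: "in_N (wone n)"
  unfolding in_N_def in_I_def by (rule exI[of _ 1]) (simp add: Ew_mult_wone)

lemma in_N_prod: "\<forall>z\<in>set zs. in_N z \<Longrightarrow> in_N (foldr (*) zs (wone n))"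
  by (induction zs) (auto simp: in_N_wone in_N_mult)

text \<open>\<open>E P(x\<^sup>a) = (x\<^sup>a - i H\<^sup>-\<^sup>1 F \<partial>\<^sup>a) E\<close>, using \<open>E f\<^sub>1(H) = H\<^sup>-\<^sup>1 E\<close> and \<open>[E, F] = H\<close>.\<close>

lemma in_N_proj_trunc_1_xw:
  assumes a: "a \<in> indices n"
  shows "in_N (proj_trunc 1 (xw a))"
proof -
  have "Ew * (fH 1 * (Fw * d_up a)) = invw [:0, 1:] * (Ew * Fw) * d_up a"
    by (simp only: mult.assoc[symmetric] Ew_fH_1)
  also have "\<dots> = invw [:0, 1:] * Fw * (Ew * d_up a) + (invw [:0, 1:] * Hw) * d_up a"
    unfolding Ew_Fw by (simp only: distrib_left distrib_right mult.assoc)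
  also have "\<dots> = (invw [:0, 1:] * Fw * d_up a) * Ew + d_up a"
    unfolding Ew_d_up invw_H_mult_Hw wone_mult_d_up by (simp only: mult.assoc)
  finally have "Ew * proj_trunc 1 (xw a) = (xw a - wscale \<i> (invw [:0, 1:] * Fw * d_up a)) * Ew"
    unfolding proj_trunc_1_xw[OF a] right_diff_distrib mult_wscale Ew_xw[OF a]
    by (simp add: left_diff_distrib)
  then show ?thesis unfolding in_N_def in_I_def by blast
qed

lemma prod_congruent_mod_I:
  assumes "length zs = length ws" "\<forall>i<length ws. in_I (zs ! i - ws ! i)" "\<forall>w\<in>set ws. in_N w"
  shows "in_I (foldr (*) zs (wone n) - foldr (*) ws (wone n))"
  using assms
proof (induction zs ws rule: list_induct2)
  case Nil
  then show ?case by (simp add: in_I_0)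
next
  case (Cons z zs w ws)
  have "in_I (z - w)" using Cons.prems(1) by (metis length_Cons nth_Cons_0 zero_less_Suc)
  moreover have "\<forall>i<length ws. in_I (zs ! i - ws ! i)"
    using Cons.prems(1) by (metis Suc_mono length_Cons nth_Cons_Suc)
  then have "in_I (foldr (*) zs (wone n) - foldr (*) ws (wone n))"
    using Cons.IH Cons.prems(2) by simp
  moreover have "in_N (foldr (*) ws (wone n))" using Cons.prems(2) in_N_prod by simp
  moreover have "foldr (*) (z # zs) (wone n) - foldr (*) (w # ws) (wone n)
      = z * (foldr (*) zs (wone n) - foldr (*) ws (wone n)) + (z - w) * foldr (*) ws (wone n)"
    by (simp add: algebra_simps)
  ultimately show ?case by (simp add: in_I_add in_I_mult_left in_I_mult_in_N)
qed

lemma P_of_iff_proj_trunc: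
  "P_of n w c \<longleftrightarrow> (\<exists>K0. \<forall>K\<ge>K0. in_I (proj_trunc K (wcls n w) - wcls n c))"
  unfolding P_of_def inI_iff_in_I wcls_esub wcls_Ptrunc ..

lemma P_of_Ptrunc_if_nilpotent:
  assumes "\<And>j. L < j \<Longrightarrow> (adw ^^ j) (wcls n w) = 0"
  shows "P_of n w (Ptrunc n L w)"
  unfolding P_of_iff_proj_trunc wcls_Ptrunc
proof (intro exI allI impI)
  fix K assume "L \<le> K"
  then show "in_I (proj_trunc K (wcls n w) - proj_trunc L (wcls n w))"
    by (simp add: proj_trunc_stable[OF assms \<open>L \<le> K\<close>] in_I_0)
qed

lemma P_of_value_if_nilpotent:
  assumes "\<And>j. L < j \<Longrightarrow> (adw ^^ j) (wcls n w) = 0" and "P_of n w c"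
  shows "in_I (proj_trunc L (wcls n w) - wcls n c)"
proof -
  obtain K0 where K0: "\<forall>K\<ge>K0. in_I (proj_trunc K (wcls n w) - wcls n c)"
    using assms(2) unfolding P_of_iff_proj_trunc by blast
  have "proj_trunc (max K0 L) (wcls n w) = proj_trunc L (wcls n w)"
    by (rule proj_trunc_stable) (use assms(1) in auto)
  then show ?thesis
    using K0 by (metis max.cobounded1)
qed

lemma P_of_xw: "a \<in> indices n \<Longrightarrow> P_of n (Gen (X a)) (Ptrunc n 1 (Gen (X a)))"
  by (rule P_of_Ptrunc_if_nilpotent) (rule adw_power_xw)

lemma P_of_xw_value:
  assumes "a \<in> indices n" and "P_of n (Gen (X a)) r"
  shows "in_I (wcls n r - proj_trunc 1 (xw a))"
  using in_I_uminus[OF P_of_value_if_nilpotent[OF adw_power_xw[OF assms(1)] assms(2)]] by simp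

lemma P_of_xmono: "set as \<subseteq> indices n \<Longrightarrow> P_of n (xmono as) (Ptrunc n (length as) (xmono as))"
  by (rule P_of_Ptrunc_if_nilpotent) (simp add: wcls_xmono adw_power_xmono_w)

lemma P_of_xmono_value:
  assumes "set as \<subseteq> indices n" and "P_of n (xmono as) c"
  shows "in_I (proj_trunc (length as) (xmono_w as) - wcls n c)"
  using P_of_value_if_nilpotent[OF _ assms(2)] adw_power_xmono_w[OF assms(1)]
  by (simp add: wcls_xmono)

lemma prod_P_of_xw_congruent:
  assumes as: "set as \<subseteq> indices n" and rs: "length rs = length as"
    and P_rs: "\<forall>i<length as. P_of n (Gen (X (as ! i))) (rs ! i)"
  shows "in_I (wcls n (eprod rs) - proj_trunc (length as) (xmono_w as))"
proof -
  let ?Ps = "map (\<lambda>a. proj_trunc 1 (xw a)) as"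
  have "in_I (foldr (*) (map (wcls n) rs) (wone n) - foldr (*) ?Ps (wone n))"
  proof (rule prod_congruent_mod_I)
    show "\<forall>i<length ?Ps. in_I (map (wcls n) rs ! i - ?Ps ! i)"
    proof (intro allI impI)
      fix i assume i: "i < length ?Ps"
      then have "as ! i \<in> indices n" "P_of n (Gen (X (as ! i))) (rs ! i)"
        using as P_rs by auto
      then show "in_I (map (wcls n) rs ! i - ?Ps ! i)"
        using P_of_xw_value i rs by simp
    qed
    show "\<forall>w\<in>set ?Ps. in_N w"
      using as in_N_proj_trunc_1_xw by auto
  qed (simp add: rs)
  then show ?thesis
    unfolding wcls_eprod prod_proj_trunc_xw[OF as] .
qed

end

theorem mainTheorem6:
  fixes n :: nat and as :: "nat list"
  assumes "length as \<ge> 1" and "set as \<subseteq> {1..n}"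
  shows "(\<forall>a\<in>set as. \<exists>r. P_of n (Gen (X a)) r)
       \<and> (\<exists>c. P_of n (xmono as) c)
       \<and> (\<forall>rs c. length rs = length as
            \<longrightarrow> (\<forall>i<length as. P_of n (Gen (X (as ! i))) (rs ! i))
            \<longrightarrow> P_of n (xmono as) c
            \<longrightarrow> inI n (esub (eprod rs) c))"
proof (intro conjI allI impI)
  have as: "set as \<subseteq> indices n" using assms(2) unfolding indices_def .
  then show "\<forall>a\<in>set as. \<exists>r. P_of n (Gen (X a)) r" and "\<exists>c. P_of n (xmono as) c"
    using P_of_xw P_of_xmono by blast+
  fix rs c
  assume "length rs = length as" "\<forall>i<length as. P_of n (Gen (X (as ! i))) (rs ! i)"
    and "P_of n (xmono as) c"
  then have "in_I n ((wcls n (eprod rs) - proj_trunc n (length as) (xmono_w n as))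
      + (proj_trunc n (length as) (xmono_w n as) - wcls n c))"
    using as by (intro in_I_add prod_P_of_xw_congruent P_of_xmono_value)
  then show "inI n (esub (eprod rs) c)"
    unfolding inI_iff_in_I wcls_esub by simp
qed

end
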